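(* Let $\mathfrak{H}:\mathcal{M}^{gen}\to\underline{\mathcal{P}}$ be a functor satisfying: (I) for every finite metric space $(X,d_X)$, $\mathfrak{H}(X,d_X)$ is a persistent set $(X,\theta_X^{\mathfrak{H}})$ with underlying set $X$, and for every morphism $f$, $\mathfrak{H}(f)=f$ as a set map; (II) for every $\delta>0$, $\mathfrak{H}(\Delta_2(\delta))=(\{p,q\},\theta)$ where $\theta(t)$ is the partition into singletons for $t<\delta$ and the single-block partition $\{\{p,q\}\}$ for $t\geq\delta$; (III) for every finite metric space $(X,d_X)$ and every $t<\mathrm{sep}(X)$, $\theta_X^{\mathfrak{H}}(t)$ is the partition of $X$ into singletons. Then $\mathfrak{H}=\mathfrak{R}$, i.e. for every finite metric space $(X,d_X)$ and every $r\geq0$, $\theta_X^{\mathfrak{H}}(r)$ is the partition of $X$ into the equivalence classes of $\sim_r$.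
   Context: $\mathcal{M}^{gen}$ is the category whose objects are finite metric spaces and whose morphisms are distance non-increasing maps. A persistent set is a pair $(X,\theta_X)$ with $X$ a finite set and $\theta_X:[0,\infty)\to\mathcal{P}(X)$ (partitions of $X$) such that $\theta_X(r)$ refines $\theta_X(s)$ whenever $r\leq s$, and for every $r$ there is $\epsilon>0$ with $\theta_X(r')=\theta_X(r)$ for all $r'\in[r,r+\epsilon]$. $\underline{\mathcal{P}}$ is the category of persistent sets whose morphisms $(X,\theta_X)\to(Y,\theta_Y)$ are set maps $f:X\to Y$ such that for every $r$, $\theta_X(r)$ refines $f^*(\theta_Y(r))$, where $f^*(P)$ is the partition of $X$ with blocks the nonempty preimages $f^{-1}(B)$, $B\in P$. $\Delta_2(\delta)$ is the metric space on $\{p,q\}$ with $d(p,q)=\delta$. $\mathrm{sep}(X)=\min_{x\neq x'}d_X(x,x')$. For $r\geq0$, $x\sim_r x'$ iff there exist $x_0=x,\ldots,x_k=x'$ in $X$ with $d_X(x_i,x_{i+1})\leq r$ for all $i$; $\mathfrak{R}(X,d_X)=(X,\theta^{\mathrm{VR}}_X)$ with $\theta^{\mathrm{VR}}_X(r)$ the partition into $\sim_r$-classes. *)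

theory Defs
  imports Complex_Main
begin

text \<open>A finite metric space: a finite carrier X with a metric d (values of d
outside X are irrelevant).\<close>
definition finite_metric_space :: "'a set \<Rightarrow> ('a \<Rightarrow> 'a \<Rightarrow> real) \<Rightarrow> bool" where
  "finite_metric_space X d \<longleftrightarrow> finite X \<and>
     (\<forall>x\<in>X. \<forall>y\<in>X. d x y \<ge> 0 \<and> (d x y = 0 \<longleftrightarrow> x = y) \<and> d x y = d y x) \<and>
     (\<forall>x\<in>X. \<forall>y\<in>X. \<forall>z\<in>X. d x z \<le> d x y + d y z)"

definition dist_nonincr :: "'a set \<Rightarrow> ('a \<Rightarrow> 'a \<Rightarrow> real) \<Rightarrow> 'a set \<Rightarrow> ('a \<Rightarrow> 'a \<Rightarrow> real) \<Rightarrow> ('a \<Rightarrow> 'a) \<Rightarrow> bool" where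
  "dist_nonincr X dX Y dY f \<longleftrightarrow> f ` X \<subseteq> Y \<and> (\<forall>x\<in>X. \<forall>x'\<in>X. dY (f x) (f x') \<le> dX x x')"

definition is_partition :: "'a set \<Rightarrow> 'a set set \<Rightarrow> bool" where
  "is_partition X P \<longleftrightarrow> \<Union>P = X \<and> {} \<notin> P \<and> (\<forall>B\<in>P. \<forall>C\<in>P. B \<noteq> C \<longrightarrow> B \<inter> C = {})"

definition refines :: "'a set set \<Rightarrow> 'a set set \<Rightarrow> bool" where
  "refines P Q \<longleftrightarrow> (\<forall>B\<in>P. \<exists>C\<in>Q. B \<subseteq> C)"

definition pullback :: "('a \<Rightarrow> 'b) \<Rightarrow> 'a set \<Rightarrow> 'b set set \<Rightarrow> 'a set set" where
  "pullback f X Q = {f -` C \<inter> X | C. C \<in> Q \<and> f -` C \<inter> X \<noteq> {}}"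

definition persistent_set :: "'a set \<Rightarrow> (real \<Rightarrow> 'a set set) \<Rightarrow> bool" where
  "persistent_set X \<theta> \<longleftrightarrow>
     (\<forall>r\<ge>0. is_partition X (\<theta> r)) \<and>
     (\<forall>r s. 0 \<le> r \<and> r \<le> s \<longrightarrow> refines (\<theta> r) (\<theta> s)) \<and>
     (\<forall>r\<ge>0. \<exists>\<epsilon>>0. \<forall>r'\<in>{r..r+\<epsilon>}. \<theta> r' = \<theta> r)"

definition pers_morphism :: "'a set \<Rightarrow> (real \<Rightarrow> 'a set set) \<Rightarrow> 'b set \<Rightarrow> (real \<Rightarrow> 'b set set) \<Rightarrow> ('a \<Rightarrow> 'b) \<Rightarrow> bool" where
  "pers_morphism X \<theta>X Y \<theta>Y f \<longleftrightarrow> f ` X \<subseteq> Y \<and> (\<forall>r\<ge>0. refines (\<theta>X r) (pullback f X (\<theta>Y r)))"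

definition sep :: "'a set \<Rightarrow> ('a \<Rightarrow> 'a \<Rightarrow> real) \<Rightarrow> real" where
  "sep X d = Min {d x x' | x x'. x \<in> X \<and> x' \<in> X \<and> x \<noteq> x'}"

definition singletons :: "'a set \<Rightarrow> 'a set set" where
  "singletons X = {{x} | x. x \<in> X}"

definition vr_equiv :: "'a set \<Rightarrow> ('a \<Rightarrow> 'a \<Rightarrow> real) \<Rightarrow> real \<Rightarrow> 'a \<Rightarrow> 'a \<Rightarrow> bool" where
  "vr_equiv X d r x x' \<longleftrightarrow> (\<exists>xs. xs \<noteq> [] \<and> hd xs = x \<and> last xs = x' \<and> set xs \<subseteq> X \<and>
       (\<forall>i. Suc i < length xs \<longrightarrow> d (xs ! i) (xs ! Suc i) \<le> r))"

definition theta_VR :: "'a set \<Rightarrow> ('a \<Rightarrow> 'a \<Rightarrow> real) \<Rightarrow> real \<Rightarrow> 'a set set" where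
  "theta_VR X d r = X // {(x, x'). vr_equiv X d r x x'}"

end

theory Submission
  imports Defs
begin

text \<open>
  Both inclusions between the two partitions come from functoriality tested against two-point
  spaces. If d x y \<le> r, the inclusion of \<Delta>_2(d x y) into X is distance non-increasing, and
  \<Delta>_2(d x y) has a single block at scale r, so x and y share a block of H(X) at scale r; blocks
  being closed under chaining, every \<sim>_r-class lies in a block. Conversely, if x \<not>\<sim>_r y, the
  \<sim>_r-class C of x is at distance \<delta> > r from its complement, so collapsing C to p and its
  complement to q is a distance non-increasing map onto \<Delta>_2(\<delta>), whose partition at scale r is
  discrete; hence x and y lie in different blocks of H(X) at scale r.
\<close>

abbreviation same_block :: "'a set set \<Rightarrow> 'a \<Rightarrow> 'a \<Rightarrow> bool" where
  "same_block P x y \<equiv> \<exists>B\<in>P. x \<in> B \<and> y \<in> B"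

lemma same_block_refl: "is_partition X P \<Longrightarrow> x \<in> X \<Longrightarrow> same_block P x x"
  unfolding is_partition_def by blast

lemma same_block_trans:
  "is_partition X P \<Longrightarrow> same_block P x y \<Longrightarrow> same_block P y z \<Longrightarrow> same_block P x z"
  unfolding is_partition_def by blast

lemma partition_eq_quotient:
  assumes P: "is_partition X P"
    and R: "\<And>x y. x \<in> X \<Longrightarrow> y \<in> X \<Longrightarrow> same_block P x y \<longleftrightarrow> R x y"
    and R_carrier: "\<And>x y. R x y \<Longrightarrow> x \<in> X \<and> y \<in> X"
  shows "P = X // {(x, y). R x y}"
proof -
  have block: "B = {y. R x y}" if B: "B \<in> P" "x \<in> B" for B x
  proof (intro equalityI subsetI)
    have x: "x \<in> X" using P B unfolding is_partition_def by blast
    fix y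
    show "y \<in> {y. R x y}" if "y \<in> B"
    proof -
      have "y \<in> X" using P B that unfolding is_partition_def by blast
      then show ?thesis using R[OF x, of y] B that by blast
    qed
    show "y \<in> B" if "y \<in> {y. R x y}"
    proof -
      have "R x y" using that by simp
      then obtain B' where "B' \<in> P" "x \<in> B'" "y \<in> B'"
        using R[OF x, of y] R_carrier[of x y] by blast
      moreover have "B' = B" if "B' \<in> P" "x \<in> B'"
        using P B that unfolding is_partition_def by blast
      ultimately show ?thesis by simp
    qed
  qed
  show ?thesis
  proof (intro equalityI subsetI)
    fix B assume B: "B \<in> P"
    then obtain x where "x \<in> B" using P unfolding is_partition_def by (metis all_not_in_conv)
    moreover have "x \<in> X" if "x \<in> B" for x using P B that unfolding is_partition_def by blast
    ultimately show "B \<in> X // {(x, y). R x y}"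
      using block[OF B] unfolding quotient_def by auto
  next
    fix A assume "A \<in> X // {(x, y). R x y}"
    then obtain x where x: "x \<in> X" "A = {y. R x y}" unfolding quotient_def by auto
    then obtain B where "B \<in> P" "x \<in> B" using P unfolding is_partition_def by blast
    then show "A \<in> P" using block x by auto
  qed
qed

lemma pers_morphism_same_block:
  assumes "pers_morphism X \<theta>X Y \<theta>Y f" "r \<ge> 0" "same_block (\<theta>X r) a b"
  shows "same_block (\<theta>Y r) (f a) (f b)"
proof -
  obtain B where B: "B \<in> \<theta>X r" "a \<in> B" "b \<in> B" using assms(3) by blast
  then obtain C where "C \<in> pullback f X (\<theta>Y r)" "B \<subseteq> C"
    using assms(1,2) unfolding pers_morphism_def refines_def by blast
  then show ?thesis using B unfolding pullback_def by auto
qed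

lemma vr_equiv_refl: "x \<in> X \<Longrightarrow> vr_equiv X d r x x"
  unfolding vr_equiv_def by (rule exI[of _ "[x]"]) auto

lemma vr_equiv_carrier: "vr_equiv X d r x y \<Longrightarrow> x \<in> X \<and> y \<in> X"
  unfolding vr_equiv_def by (metis hd_in_set last_in_set subsetD)

lemma vr_equiv_step:
  assumes "vr_equiv X d r x a" "b \<in> X" "d a b \<le> r"
  shows "vr_equiv X d r x b"
proof -
  obtain xs where xs: "xs \<noteq> []" "hd xs = x" "last xs = a" "set xs \<subseteq> X"
    and steps: "\<forall>i. Suc i < length xs \<longrightarrow> d (xs ! i) (xs ! Suc i) \<le> r"
    using assms(1) unfolding vr_equiv_def by blast
  have "d ((xs @ [b]) ! i) ((xs @ [b]) ! Suc i) \<le> r" if "Suc i < length (xs @ [b])" for i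
  proof (cases "Suc i < length xs")
    case True
    then show ?thesis using steps by (simp add: nth_append)
  next
    case False
    then have "i = length xs - 1" using that by simp
    then show ?thesis using xs(1,3) assms(3) False by (simp add: nth_append last_conv_nth)
  qed
  then show ?thesis unfolding vr_equiv_def using xs assms(2)
    by (intro exI[of _ "xs @ [b]"]) auto
qed

lemma vr_equiv_least:
  assumes refl: "\<And>x. x \<in> X \<Longrightarrow> R x x"
    and trans: "\<And>x y z. R x y \<Longrightarrow> R y z \<Longrightarrow> R x z"
    and close: "\<And>x y. x \<in> X \<Longrightarrow> y \<in> X \<Longrightarrow> d x y \<le> r \<Longrightarrow> R x y"
    and "vr_equiv X d r x y"
  shows "R x y"
proof -
  have "R (hd xs) (last xs)"
    if "xs \<noteq> []" "set xs \<subseteq> X" "\<forall>i. Suc i < length xs \<longrightarrow> d (xs ! i) (xs ! Suc i) \<le> r" for xs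
    using that
  proof (induction xs)
    case Nil
    then show ?case by simp
  next
    case (Cons a xs)
    show ?case
    proof (cases "xs = []")
      case True
      then show ?thesis using Cons.prems refl by simp
    next
      case False
      have "R (hd xs) (last xs)" using Cons False by fastforce
      have "d a (hd xs) \<le> r"
        using Cons.prems(3)[rule_format, of 0] False by (simp add: hd_conv_nth)
      moreover have "a \<in> X" "hd xs \<in> X" using Cons.prems(2) False by auto
      ultimately have "R a (hd xs)" using close by blast
      then show ?thesis using trans \<open>R (hd xs) (last xs)\<close> False by auto
    qed
  qed
  then show ?thesis using assms(4) unfolding vr_equiv_def by blast
qed

lemma vr_class_gap:
  assumes "finite X" "x \<in> X" "y \<in> X" "\<not> vr_equiv X d r x y"
  obtains \<delta> where "\<delta> > r"
    and "\<And>a b. vr_equiv X d r x a \<Longrightarrow> b \<in> X \<Longrightarrow> \<not> vr_equiv X d r x b \<Longrightarrow> \<delta> \<le> d a b"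
proof -
  define C where "C = {a \<in> X. vr_equiv X d r x a}"
  define D where "D = (\<lambda>(a, b). d a b) ` (C \<times> (X - C))"
  have "x \<in> C" using assms(2) vr_equiv_refl[OF assms(2), of d r] unfolding C_def by blast
  moreover have "y \<in> X - C" using assms(3,4) unfolding C_def by blast
  moreover have "finite C" using assms(1) unfolding C_def by simp
  ultimately have "finite D" "D \<noteq> {}" using assms(1) unfolding D_def by auto
  moreover have "r < d a b" if "a \<in> C" "b \<in> X - C" for a b
    using that vr_equiv_step[of X d r x a b] unfolding C_def by force
  then have "e > r" if "e \<in> D" for e using that unfolding D_def by auto
  ultimately have "Min D > r" by simp
  moreover have "Min D \<le> d a b"
    if "vr_equiv X d r x a" "b \<in> X" "\<not> vr_equiv X d r x b" for a b
  proof (rule Min_le)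
    show "d a b \<in> D"
      using that vr_equiv_carrier[of X d r x a] unfolding D_def C_def by force
  qed (fact \<open>finite D\<close>)
  ultimately show ?thesis using that by blast
qed

lemma finite_metric_space_dist:
  assumes "finite_metric_space X d" "x \<in> X" "y \<in> X"
  shows "d x y \<ge> 0" "d x y = 0 \<longleftrightarrow> x = y" "d x y = d y x"
  using assms unfolding finite_metric_space_def by blast+

definition two_point_metric :: "real \<Rightarrow> 'a \<Rightarrow> 'a \<Rightarrow> real" where
  "two_point_metric \<delta> a b = (if a = b then 0 else \<delta>)"

lemma finite_metric_space_two_point:
  "p \<noteq> q \<Longrightarrow> \<delta> > 0 \<Longrightarrow> finite_metric_space {p, q} (two_point_metric \<delta>)"
  by (auto simp: finite_metric_space_def two_point_metric_def)

lemma dist_nonincr_two_point_inclusion: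
  assumes "finite_metric_space X d" "x \<in> X" "y \<in> X"
  shows "dist_nonincr {x, y} (two_point_metric (d x y)) X d id"
  using assms finite_metric_space_dist[OF assms(1) assms(2,3)]
    finite_metric_space_dist(2)[OF assms(1) assms(2,2)]
    finite_metric_space_dist(2)[OF assms(1) assms(3,3)]
  unfolding dist_nonincr_def two_point_metric_def by auto

lemma dist_nonincr_collapse:
  assumes "finite_metric_space X d" "C \<subseteq> X"
    and gap: "\<And>a b. a \<in> C \<Longrightarrow> b \<in> X - C \<Longrightarrow> \<delta> \<le> d a b"
  shows "dist_nonincr X d {p, q} (two_point_metric \<delta>) (\<lambda>z. if z \<in> C then p else q)"
  unfolding dist_nonincr_def
proof (intro conjI ballI)
  fix a b assume ab: "a \<in> X" "b \<in> X"
  have "d a b \<ge> 0" "d a b = d b a" using finite_metric_space_dist[OF assms(1) ab] by simp_all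
  then show "two_point_metric \<delta> (if a \<in> C then p else q) (if b \<in> C then p else q) \<le> d a b"
    using gap[of a b] gap[of b a] ab unfolding two_point_metric_def by auto
qed auto

locale two_point_faithful =
  fixes H :: "'a set \<Rightarrow> ('a \<Rightarrow> 'a \<Rightarrow> real) \<Rightarrow> real \<Rightarrow> 'a set set"
  assumes obj: "\<And>X d. finite_metric_space X d \<Longrightarrow> persistent_set X (H X d)"
    and morph: "\<And>X dX Y dY f. finite_metric_space X dX \<Longrightarrow> finite_metric_space Y dY \<Longrightarrow>
        dist_nonincr X dX Y dY f \<Longrightarrow> pers_morphism X (H X dX) Y (H Y dY) f"
    and two_point: "\<And>p q d \<delta> t. \<delta> > 0 \<Longrightarrow> p \<noteq> q \<Longrightarrow> finite_metric_space {p, q} d \<Longrightarrow>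
        d p q = \<delta> \<Longrightarrow> t \<ge> 0 \<Longrightarrow>
        H {p, q} d t = (if t < \<delta> then {{p}, {q}} else {{p, q}})"
begin

lemma is_partition_H: "finite_metric_space X d \<Longrightarrow> r \<ge> 0 \<Longrightarrow> is_partition X (H X d r)"
  using obj unfolding persistent_set_def by blast

lemma same_block_if_dist_le:
  assumes fms: "finite_metric_space X d" and r: "r \<ge> 0"
    and xy: "x \<in> X" "y \<in> X" "d x y \<le> r"
  shows "same_block (H X d r) x y"
proof (cases "x = y")
  case True
  then show ?thesis using same_block_refl[OF is_partition_H[OF fms r] xy(1)] by simp
next
  case False
  then have pos: "d x y > 0" using finite_metric_space_dist[OF fms xy(1,2)] by auto
  let ?d2 = "two_point_metric (d x y)"
  have fms2: "finite_metric_space {x, y} ?d2"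
    using finite_metric_space_two_point[OF False pos] .
  have "H {x, y} ?d2 r = {{x, y}}"
    using two_point[OF pos False fms2 _ r] xy(3) False by (simp add: two_point_metric_def)
  then have merged: "same_block (H {x, y} ?d2 r) x y" by simp
  have "pers_morphism {x, y} (H {x, y} ?d2) X (H X d) id"
    using morph[OF fms2 fms dist_nonincr_two_point_inclusion[OF fms xy(1,2)]] .
  from pers_morphism_same_block[OF this r merged] show ?thesis by simp
qed

lemma same_block_if_vr_equiv:
  assumes fms: "finite_metric_space X d" and r: "r \<ge> 0" and "vr_equiv X d r x y"
  shows "same_block (H X d r) x y"
proof (rule vr_equiv_least[where X = X and d = d and r = r and R = "same_block (H X d r)"])
  have P: "is_partition X (H X d r)" using is_partition_H fms r .
  show "same_block (H X d r) x x" if "x \<in> X" for x using same_block_refl[OF P that] .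
  show "same_block (H X d r) x z"
    if "same_block (H X d r) x y" "same_block (H X d r) y z" for x y z
    using same_block_trans[OF P that] .
  show "same_block (H X d r) x y" if "x \<in> X" "y \<in> X" "d x y \<le> r" for x y
    using same_block_if_dist_le[OF fms r that] .
qed (fact assms(3))

lemma vr_equiv_if_same_block:
  assumes fms: "finite_metric_space X d" and r: "r \<ge> 0"
    and xy: "x \<in> X" "y \<in> X" "same_block (H X d r) x y"
  shows "vr_equiv X d r x y"
proof (rule ccontr)
  assume not_equiv: "\<not> vr_equiv X d r x y"
  then have "x \<noteq> y" using vr_equiv_refl[OF xy(1), of d r] by blast
  obtain \<delta> where "\<delta> > r"
    and gap: "\<And>a b. vr_equiv X d r x a \<Longrightarrow> b \<in> X \<Longrightarrow> \<not> vr_equiv X d r x b \<Longrightarrow> \<delta> \<le> d a b"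
    using vr_class_gap[of X x y d r] fms xy(1,2) not_equiv
    unfolding finite_metric_space_def by blast
  define C where "C = {a \<in> X. vr_equiv X d r x a}"
  define f where "f = (\<lambda>z. if z \<in> C then x else y)"
  have fms2: "finite_metric_space {x, y} (two_point_metric \<delta>)"
    using finite_metric_space_two_point \<open>x \<noteq> y\<close> \<open>\<delta> > r\<close> r by force
  have "dist_nonincr X d {x, y} (two_point_metric \<delta>) f"
    unfolding f_def
  proof (rule dist_nonincr_collapse[OF fms])
    show "C \<subseteq> X" unfolding C_def by blast
    show "\<delta> \<le> d a b" if "a \<in> C" "b \<in> X - C" for a b
      using gap that unfolding C_def by blast
  qed
  then have "same_block (H {x, y} (two_point_metric \<delta>) r) (f x) (f y)"
    using pers_morphism_same_block[OF morph[OF fms fms2] r xy(3)] by blast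
  moreover have "f x = x" "f y = y"
    using vr_equiv_refl[OF xy(1), of d r] xy not_equiv unfolding f_def C_def by auto
  moreover have "H {x, y} (two_point_metric \<delta>) r = {{x}, {y}}"
    using two_point[OF _ \<open>x \<noteq> y\<close> fms2 _ r] \<open>\<delta> > r\<close> r \<open>x \<noteq> y\<close>
    by (simp add: two_point_metric_def)
  ultimately show False using \<open>x \<noteq> y\<close> by auto
qed

theorem H_eq_theta_VR:
  assumes "finite_metric_space X d" "r \<ge> 0"
  shows "H X d r = theta_VR X d r"
  unfolding theta_VR_def
proof (rule partition_eq_quotient[OF is_partition_H[OF assms]])
  show "same_block (H X d r) x y \<longleftrightarrow> vr_equiv X d r x y" if "x \<in> X" "y \<in> X" for x y
    using same_block_if_vr_equiv vr_equiv_if_same_block assms that by blast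
qed (fact vr_equiv_carrier)

end

theorem mainTheorem9:
  fixes H :: "'a set \<Rightarrow> ('a \<Rightarrow> 'a \<Rightarrow> real) \<Rightarrow> real \<Rightarrow> 'a set set"
  assumes obj: "\<And>X d. finite_metric_space X d \<Longrightarrow> persistent_set X (H X d)"
    and morph: "\<And>X dX Y dY f. finite_metric_space X dX \<Longrightarrow> finite_metric_space Y dY \<Longrightarrow>
        dist_nonincr X dX Y dY f \<Longrightarrow> pers_morphism X (H X dX) Y (H Y dY) f"
    and two_point: "\<And>p q d \<delta> t. \<delta> > 0 \<Longrightarrow> p \<noteq> q \<Longrightarrow> finite_metric_space {p, q} d \<Longrightarrow>
        d p q = \<delta> \<Longrightarrow> t \<ge> 0 \<Longrightarrow>
        H {p, q} d t = (if t < \<delta> then {{p}, {q}} else {{p, q}})"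
    and small_scale: "\<And>X d t. finite_metric_space X d \<Longrightarrow> 0 \<le> t \<Longrightarrow> t < sep X d \<Longrightarrow>
        H X d t = singletons X"
  shows "\<forall>X d r. finite_metric_space X d \<and> r \<ge> 0 \<longrightarrow> H X d r = theta_VR X d r"
proof -
  interpret two_point_faithful H
    using obj morph two_point by unfold_locales
  show ?thesis using H_eq_theta_VR by blast
qed

end
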